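(* Let $k \geq 1$ and $\Sigma = \{a_0, a_1, \ldots, a_{k-1}\}$. Consider the context-free grammar $G$ with terminal symbols $\Sigma \cup \{\epsilon, +, *, (, )\}$, start symbol $S$, non-terminals $S, E, E_i, Y, Y', Y_i, Y_i', Z, Z_i, P_i, P_i'$ (for $0 \le i < k$), and productions \begin{itemize} \item $S \to Y \mid Z$; \item $E \to Y \mid (Z) \mid (\epsilon + Y') \mid (\epsilon + Z)$; \item $E_i \to Y_i \mid (Z_i) \mid (\epsilon + Y_i') \mid (\epsilon + Z_i)$ for $0 \le i < k$; \item $Y \to P_i$ for each $0 \le i < k$; \item $Y' \to P_i'$ for each $0 \le i < k$; \item $Y_i \to P_j$ for all $0 \le i, j < k$ with $i \neq j$; \item $Y_i' \to P_j'$ for all $0 \le i, j < k$ with $i \neq j$; \item $Z \to P_{n_0}' + P_{n_1}' + \cdots + P_{n_t}'$ for all $t > 0$ and all $0 \le n_0 < n_1 < \cdots < n_t < k$; \item $Z_i \to P_{n_0}' + P_{n_1}' + \cdots + P_{n_t}'$ for all $t > 0$ and all $0 \le n_0 < n_1 < \cdots < n_t < k$ with $n_j \neq i$ for all $0 \le j \le t$; \item $P_i \to a_i \mid a_i E \mid a_i a_j * \mid a_i a_j * E_j$ for all $0 \le i, j < k$; \item $P_i' \to a_i \mid a_i E \mid a_i a_j * \mid a_i a_j * E_j$ for all $0 \le i, j < k$ with $i \neq j$. \end{itemize} Then $G$ is unambiguous, and any two distinct strings generated by $G$ (from $S$), read as regular expressions, denote distinct regular languages.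
   Context: Strings generated by the grammar are interpreted as regular expressions over $\Sigma$ in the usual way: $\epsilon$ denotes the empty word, $+$ is union, juxtaposition is concatenation, $*$ is Kleene star (applied here to the single preceding symbol $a_j$), with the standard precedence (star over concatenation over union) and parentheses for grouping. A context-free grammar is unambiguous if every string it generates has exactly one parse tree. *)

theory Defs
  imports Main
begin

datatype tm = Sym nat | Eps | Plus | Star | LP | RP

datatype nt = NS | NE | NEi nat | NY | NY' | NYi nat | NYi' nat | NZ | NZi nat
  | NP nat | NP' nat

datatype gsym = T tm | N nt

fun sum_rhs :: "nat list \<Rightarrow> gsym list" where
  "sum_rhs [] = []"
| "sum_rhs [n] = [N (NP' n)]"
| "sum_rhs (n # ns) = N (NP' n) # T Plus # sum_rhs ns"

inductive prod :: "nat \<Rightarrow> nt \<Rightarrow> gsym list \<Rightarrow> bool" for k :: nat where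
  S_Y: "prod k NS [N NY]"
| S_Z: "prod k NS [N NZ]"
| E_Y: "prod k NE [N NY]"
| E_Z: "prod k NE [T LP, N NZ, T RP]"
| E_Y': "prod k NE [T LP, T Eps, T Plus, N NY', T RP]"
| E_epsZ: "prod k NE [T LP, T Eps, T Plus, N NZ, T RP]"
| Ei_Y: "i < k \<Longrightarrow> prod k (NEi i) [N (NYi i)]"
| Ei_Z: "i < k \<Longrightarrow> prod k (NEi i) [T LP, N (NZi i), T RP]"
| Ei_Y': "i < k \<Longrightarrow> prod k (NEi i) [T LP, T Eps, T Plus, N (NYi' i), T RP]"
| Ei_epsZ: "i < k \<Longrightarrow> prod k (NEi i) [T LP, T Eps, T Plus, N (NZi i), T RP]"
| Y_P: "i < k \<Longrightarrow> prod k NY [N (NP i)]"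
| Y'_P': "i < k \<Longrightarrow> prod k NY' [N (NP' i)]"
| Yi_P: "i < k \<Longrightarrow> j < k \<Longrightarrow> i \<noteq> j \<Longrightarrow> prod k (NYi i) [N (NP j)]"
| Yi'_P': "i < k \<Longrightarrow> j < k \<Longrightarrow> i \<noteq> j \<Longrightarrow> prod k (NYi' i) [N (NP' j)]"
| Z_sum: "sorted_wrt (<) ns \<Longrightarrow> length ns \<ge> 2 \<Longrightarrow> (\<forall>n\<in>set ns. n < k)
           \<Longrightarrow> prod k NZ (sum_rhs ns)"
| Zi_sum: "i < k \<Longrightarrow> sorted_wrt (<) ns \<Longrightarrow> length ns \<ge> 2 \<Longrightarrow> (\<forall>n\<in>set ns. n < k)
           \<Longrightarrow> i \<notin> set ns \<Longrightarrow> prod k (NZi i) (sum_rhs ns)"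
| P_a: "i < k \<Longrightarrow> j < k \<Longrightarrow> prod k (NP i) [T (Sym i)]"
| P_aE: "i < k \<Longrightarrow> j < k \<Longrightarrow> prod k (NP i) [T (Sym i), N NE]"
| P_aastar: "i < k \<Longrightarrow> j < k \<Longrightarrow> prod k (NP i) [T (Sym i), T (Sym j), T Star]"
| P_aastarE: "i < k \<Longrightarrow> j < k \<Longrightarrow> prod k (NP i) [T (Sym i), T (Sym j), T Star, N (NEi j)]"
| P'_a: "i < k \<Longrightarrow> j < k \<Longrightarrow> i \<noteq> j \<Longrightarrow> prod k (NP' i) [T (Sym i)]"
| P'_aE: "i < k \<Longrightarrow> j < k \<Longrightarrow> i \<noteq> j \<Longrightarrow> prod k (NP' i) [T (Sym i), N NE]"
| P'_aastar: "i < k \<Longrightarrow> j < k \<Longrightarrow> i \<noteq> j \<Longrightarrow> prod k (NP' i) [T (Sym i), T (Sym j), T Star]"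
| P'_aastarE: "i < k \<Longrightarrow> j < k \<Longrightarrow> i \<noteq> j \<Longrightarrow>
     prod k (NP' i) [T (Sym i), T (Sym j), T Star, N (NEi j)]"

datatype ptree = Leaf tm | Node nt "ptree list"

fun root :: "ptree \<Rightarrow> gsym" where
  "root (Leaf t) = T t"
| "root (Node A ts) = N A"

fun yield :: "ptree \<Rightarrow> tm list" where
  "yield (Leaf t) = [t]"
| "yield (Node A ts) = concat (map yield ts)"

inductive valid :: "nat \<Rightarrow> ptree \<Rightarrow> bool" for k :: nat where
  "valid k (Leaf t)"
| "prod k A (map root ts) \<Longrightarrow> (\<forall>t\<in>set ts. valid k t) \<Longrightarrow> valid k (Node A ts)"

definition generates :: "nat \<Rightarrow> tm list \<Rightarrow> bool" where
  "generates k w \<longleftrightarrow> (\<exists>t. valid k t \<and> root t = N NS \<and> yield t = w)"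

definition unambiguous :: "nat \<Rightarrow> bool" where
  "unambiguous k \<longleftrightarrow> (\<forall>t1 t2. valid k t1 \<and> valid k t2 \<and> root t1 = N NS \<and> root t2 = N NS
      \<and> yield t1 = yield t2 \<longrightarrow> t1 = t2)"

text \<open>Languages over Sigma = {a_0,...}; words are lists of letter indices.\<close>
definition conc :: "nat list set \<Rightarrow> nat list set \<Rightarrow> nat list set" where
  "conc A B = {u @ v | u v. u \<in> A \<and> v \<in> B}"

inductive_set kstar :: "nat list set \<Rightarrow> nat list set" for A where
  "[] \<in> kstar A"
| "u \<in> A \<Longrightarrow> v \<in> kstar A \<Longrightarrow> u @ v \<in> kstar A"

inductive re_atom :: "tm list \<Rightarrow> nat list set \<Rightarrow> bool"
  and re_factor :: "tm list \<Rightarrow> nat list set \<Rightarrow> bool"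
  and re_term :: "tm list \<Rightarrow> nat list set \<Rightarrow> bool"
  and re_expr :: "tm list \<Rightarrow> nat list set \<Rightarrow> bool" where
  at_sym: "re_atom [Sym i] {[i]}"
| at_eps: "re_atom [Eps] {[]}"
| at_par: "re_expr w L \<Longrightarrow> re_atom ([LP] @ w @ [RP]) L"
| fa_atom: "re_atom w L \<Longrightarrow> re_factor w L"
| fa_star: "re_atom w L \<Longrightarrow> re_factor (w @ [Star]) (kstar L)"
| te_factor: "re_factor w L \<Longrightarrow> re_term w L"
| te_conc: "re_term w1 L1 \<Longrightarrow> re_factor w2 L2 \<Longrightarrow> re_term (w1 @ w2) (conc L1 L2)"
| ex_term: "re_term w L \<Longrightarrow> re_expr w L"
| ex_union: "re_expr w1 L1 \<Longrightarrow> re_term w2 L2 \<Longrightarrow> re_expr (w1 @ [Plus] @ w2) (L1 \<union> L2)"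

end

theory Submission
  imports Defs
begin

(*
  Read every parse tree t bottom-up as the language sem t of its productions. The yield of a tree
  from S is a regular expression denoting sem t, and a string has at most one reading, because the
  parenthesis depth locates the top-level + and concatenations. So both claims follow once a tree
  from S is shown to be determined by its language.

  This is proved bottom-up with left quotients. A P_i- or P_i'-language has a_i as its only initial
  letter, a Z-language has at least two initial letters and an E_i-language avoids a_i; hence the
  empty word and the initial letters tell apart the alternatives of S, E, Y and Z, and the initial
  letters of a Z-language determine its summands. For P_i the tail T, the quotient of the language
  by a_i, decides between a_i, a_i E, a_i a_j* and a_i a_j* E_j: the loop a_j* makes T invariant
  under quotienting by a_j, whereas if the language T of an E-tree were invariant under quotienting
  by a_j, every word of T would start with a_j, i.e. T = a_j T, which a shortest word refutes. That
  E-languages have this property rests on the primed P_i', which exclude the loop a_i a_i*.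
*)

section \<open>Reading a string as a regular expression is functional\<close>

fun depth :: "tm list \<Rightarrow> int" where
  "depth [] = 0"
| "depth (LP # w) = depth w + 1"
| "depth (RP # w) = depth w - 1"
| "depth (x # w) = depth w"

lemma depth_append [simp]: "depth (u @ v) = depth u + depth v"
  by (induction u rule: depth.induct) auto

definition balanced :: "tm list \<Rightarrow> bool" where
  "balanced w \<longleftrightarrow> depth w = 0 \<and> (\<forall>u v. w = u @ v \<longrightarrow> 0 \<le> depth u)"

definition plus_nested :: "tm list \<Rightarrow> bool" where
  "plus_nested w \<longleftrightarrow> (\<forall>u v. w = u @ Plus # v \<longrightarrow> 0 < depth u)"

lemma balanced_append:
  assumes "balanced u" "balanced v" shows "balanced (u @ v)"
  unfolding balanced_def
proof (intro conjI allI impI)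
  fix x y assume "u @ v = x @ y"
  then obtain z where "u = x @ z \<or> x = u @ z \<and> v = z @ y"
    by (blast dest: append_eq_append_conv2[THEN iffD1])
  then show "0 \<le> depth x" using assms unfolding balanced_def by fastforce
qed (use assms in \<open>simp add: balanced_def\<close>)

lemma balanced_single: "x \<notin> {LP, RP} \<Longrightarrow> balanced [x]"
  by (cases x) (auto simp: balanced_def Cons_eq_append_conv)

lemma balanced_par:
  assumes "balanced w" shows "balanced (LP # w @ [RP])"
  unfolding balanced_def
proof (intro conjI allI impI)
  fix x y assume xy: "LP # w @ [RP] = x @ y"
  show "0 \<le> depth x"
  proof (cases x)
    case (Cons a x')
    then have "w @ [RP] = x' @ y" using xy by simp
    then obtain z where "w = x' @ z \<or> x' = w @ z \<and> [RP] = z @ y"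
      by (blast dest: append_eq_append_conv2[THEN iffD1])
    then have "w = x' @ z \<or> x' = w \<or> x' = w @ [RP]"
      by (auto simp: Cons_eq_append_conv)
    then show ?thesis using assms Cons xy unfolding balanced_def by fastforce
  qed simp
qed (use assms in \<open>simp add: balanced_def\<close>)

lemma plus_nested_append:
  assumes "plus_nested u" "plus_nested v" "depth u = 0" shows "plus_nested (u @ v)"
  unfolding plus_nested_def
proof (intro allI impI)
  fix x y assume "u @ v = x @ Plus # y"
  then obtain z where "u = x @ z \<and> z @ v = Plus # y \<or> x = u @ z \<and> v = z @ Plus # y"
    by (blast dest: append_eq_append_conv2[THEN iffD1])
  then consider z' where "u = x @ Plus # z'" | "x = u @ z" "v = z @ Plus # y"
    by (cases z) (auto simp: Cons_eq_append_conv)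
  then show "0 < depth x"
    by cases (use assms in \<open>auto simp: plus_nested_def\<close>)
qed

lemma plus_nested_single: "x \<noteq> Plus \<Longrightarrow> plus_nested [x]"
  by (auto simp: plus_nested_def Cons_eq_append_conv)

lemma plus_nested_par:
  assumes "balanced w" shows "plus_nested (LP # w @ [RP])"
  unfolding plus_nested_def
proof (intro allI impI)
  fix x y assume xy: "LP # w @ [RP] = x @ Plus # y"
  then obtain x' where x': "x = LP # x'" by (cases x) auto
  with xy have "w @ [RP] = x' @ Plus # y" by simp
  then obtain z where "w = x' @ z \<or> x' = w @ z \<and> [RP] = z @ Plus # y"
    by (blast dest: append_eq_append_conv2[THEN iffD1])
  then obtain z where "w = x' @ z" by (auto simp: Cons_eq_append_conv)
  then show "0 < depth x" using assms x' unfolding balanced_def by fastforce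
qed

lemma re_wellformed:
  "(re_atom w L \<longrightarrow> balanced w \<and> plus_nested w \<and> w \<noteq> [] \<and> last w \<noteq> Star)
 \<and> (re_factor w L \<longrightarrow> balanced w \<and> plus_nested w \<and> w \<noteq> [])
 \<and> (re_term w L \<longrightarrow> balanced w \<and> plus_nested w \<and> w \<noteq> [])
 \<and> (re_expr w L \<longrightarrow> balanced w \<and> w \<noteq> [])"
proof (induction rule: re_atom_re_factor_re_term_re_expr.induct)
  case (at_par w L)
  then show ?case using balanced_par plus_nested_par by simp
next
  case (fa_star w L)
  then have "depth w = 0" by (simp add: balanced_def)
  with fa_star show ?case
    by (simp add: balanced_append balanced_single plus_nested_append plus_nested_single)
next
  case (te_conc w1 L1 w2 L2)
  then have "depth w1 = 0" by (simp add: balanced_def)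
  with te_conc show ?case by (simp add: balanced_append plus_nested_append)
next
  case (ex_union w1 L1 w2 L2)
  then have "balanced ((w1 @ [Plus]) @ w2)"
    by (intro balanced_append) (simp_all add: balanced_single)
  then show ?case by simp
qed (auto simp: balanced_single plus_nested_single)

lemmas re_atom_wf = re_wellformed[THEN conjunct1, rule_format]
  and re_factor_wf = re_wellformed[THEN conjunct2, THEN conjunct1, rule_format]
  and re_term_wf = re_wellformed[THEN conjunct2, THEN conjunct2, THEN conjunct1, rule_format]
  and re_expr_wf = re_wellformed[THEN conjunct2, THEN conjunct2, THEN conjunct2, rule_format]

lemma re_atom_suffix:
  assumes "re_atom w L" "re_atom (u @ w) M" shows "u = []"
  using assms(2)
proof cases
  case (at_par e')
  show ?thesis
  proof (rule ccontr)
    assume "u \<noteq> []"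
    have "w \<noteq> []" using re_atom_wf[OF assms(1)] by simp
    have eq: "u @ w = LP # e' @ [RP]" using at_par by simp
    then have "last (u @ w) = RP" by simp
    with \<open>w \<noteq> []\<close> have "last w = RP" by simp
    from assms(1) this obtain e L' where w: "w = LP # e @ [RP]" "re_expr e L'"
      by cases auto
    from \<open>u \<noteq> []\<close> eq obtain u' where "e' = u' @ LP # e"
      by (cases u) (auto simp: w)
    with at_par(2) w(2) have "balanced (u' @ LP # e)" "balanced e"
      using re_expr_wf by auto
    then have "depth u' = -1" "0 \<le> depth u'" unfolding balanced_def by auto
    then show False by simp
  qed
qed (use re_atom_wf[OF assms(1)] in \<open>auto simp: append_eq_Cons_conv\<close>)

lemma re_factor_suffix:
  assumes "re_factor w L" "re_factor (u @ w) M" shows "u = []"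
  using assms(1)
proof cases
  case (fa_atom)
  have "w \<noteq> []" "last w \<noteq> Star" using re_atom_wf[OF fa_atom] by auto
  from assms(2) show ?thesis
  proof cases
    case (fa_star a M')
    then have "last (u @ w) = Star" by simp
    with \<open>w \<noteq> []\<close> \<open>last w \<noteq> Star\<close> show ?thesis by simp
  qed (use fa_atom re_atom_suffix in blast)
next
  case (fa_star a L')
  from assms(2) show ?thesis
  proof cases
    case fa_atom
    then show ?thesis using fa_star re_atom_wf by fastforce
  qed (use fa_star re_atom_suffix in auto)
qed

lemma re_term_conc_split:
  assumes "re_term u1 L1" "re_factor v1 M1" "re_term u2 L2" "re_factor v2 M2"
    and "u1 @ v1 = u2 @ v2"
  shows "u1 = u2 \<and> v1 = v2"
proof -
  obtain z where z: "u1 = u2 @ z \<and> z @ v1 = v2 \<or> u1 @ z = u2 \<and> v1 = z @ v2"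
    using assms(5) by (blast dest: append_eq_append_conv2[THEN iffD1])
  then have "z = []" using re_factor_suffix assms(2,4) by blast
  then show ?thesis using z by auto
qed

lemma re_factor_not_conc:
  assumes "re_factor (u @ v) L" "re_term u L1" "re_factor v L2" shows False
  using re_factor_suffix[OF assms(3,1)] re_term_wf[OF assms(2)] by simp

lemma re_expr_union_overlap:
  assumes "re_expr u L" "re_expr (u @ Plus # z) L'" "re_term (z @ Plus # v) M" shows False
proof -
  have "depth z = 0" using re_expr_wf[OF assms(1)] re_expr_wf[OF assms(2)]
    by (simp add: balanced_def)
  moreover have "0 < depth z" using re_term_wf[OF assms(3)] by (simp add: plus_nested_def)
  ultimately show False by simp
qed

lemma re_expr_union_split:
  assumes "re_expr u1 L1" "re_term v1 M1" "re_expr u2 L2" "re_term v2 M2"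
    and "u1 @ Plus # v1 = u2 @ Plus # v2"
  shows "u1 = u2 \<and> v1 = v2"
proof -
  obtain z where z: "u1 = u2 @ z \<and> z @ Plus # v1 = Plus # v2 \<or> u1 @ z = u2 \<and> Plus # v1 = z @ Plus # v2"
    using assms(5) by (blast dest: append_eq_append_conv2[THEN iffD1])
  have "z = []"
  proof (rule ccontr)
    assume "z \<noteq> []"
    with z obtain z' where "u1 = u2 @ Plus # z' \<and> v2 = z' @ Plus # v1 \<or> u2 = u1 @ Plus # z' \<and> v1 = z' @ Plus # v2"
      by (cases z) auto
    then show False
    proof (elim disjE conjE)
      assume "u1 = u2 @ Plus # z'" "v2 = z' @ Plus # v1"
      then show False using re_expr_union_overlap[of u2 L2 z' L1 v1 M2] assms(1,3,4) by simp
    next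
      assume "u2 = u1 @ Plus # z'" "v1 = z' @ Plus # v2"
      then show False using re_expr_union_overlap[of u1 L1 z' L2 v2 M1] assms(1,2,3) by simp
    qed
  qed
  then show ?thesis using z by auto
qed

lemma re_term_not_union:
  assumes "re_term (u @ Plus # v) L" "re_expr u L'" shows False
proof -
  have "0 < depth u" using re_term_wf[OF assms(1)] by (simp add: plus_nested_def)
  then show False using re_expr_wf[OF assms(2)] by (simp add: balanced_def)
qed

lemma re_unique:
  "(re_atom w L \<longrightarrow> (\<forall>L'. re_atom w L' \<longrightarrow> L' = L))
 \<and> (re_factor w L \<longrightarrow> (\<forall>L'. re_factor w L' \<longrightarrow> L' = L))
 \<and> (re_term w L \<longrightarrow> (\<forall>L'. re_term w L' \<longrightarrow> L' = L))
 \<and> (re_expr w L \<longrightarrow> (\<forall>L'. re_expr w L' \<longrightarrow> L' = L))"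
proof (induction rule: re_atom_re_factor_re_term_re_expr.induct)
  case (at_par w L)
  show ?case
  proof (intro allI impI)
    fix L' assume "re_atom ([LP] @ w @ [RP]) L'"
    then show "L' = L" by cases (use at_par.IH in auto)
  qed
next
  case (fa_atom w L)
  show ?case
  proof (intro allI impI)
    fix L' assume "re_factor w L'"
    then show "L' = L"
    proof cases
      case (fa_star a M)
      then show ?thesis using re_atom_wf[OF fa_atom.hyps] by simp
    qed (use fa_atom.IH in blast)
  qed
next
  case (fa_star w L)
  show ?case
  proof (intro allI impI)
    fix L' assume "re_factor (w @ [Star]) L'"
    then show "L' = kstar L"
    proof cases
      case fa_atom
      then show ?thesis using re_atom_wf[OF fa_atom] by simp
    qed (use fa_star.IH in simp)
  qed
next
  case (te_factor w L)
  show ?case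
  proof (intro allI impI)
    fix L' assume "re_term w L'"
    then show "L' = L"
    proof cases
      case (te_conc u L1 v L2)
      then show ?thesis using re_factor_not_conc te_factor.hyps by blast
    qed (use te_factor.IH in blast)
  qed
next
  case (te_conc w1 L1 w2 L2)
  show ?case
  proof (intro allI impI)
    fix L' assume "re_term (w1 @ w2) L'"
    then show "L' = conc L1 L2"
    proof cases
      case te_factor
      then show ?thesis using re_factor_not_conc te_conc.hyps by blast
    next
      case (te_conc w1' L1' w2' L2')
      then have "w1' = w1 \<and> w2' = w2"
        using re_term_conc_split[OF te_conc(3,4) te_conc.hyps] by simp
      then show ?thesis using te_conc te_conc.IH by simp
    qed
  qed
next
  case (ex_term w L)
  show ?case
  proof (intro allI impI)
    fix L' assume "re_expr w L'"
    then show "L' = L"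
    proof cases
      case (ex_union u L1 v L2)
      then show ?thesis using re_term_not_union[of u v L L1] ex_term.hyps by simp
    qed (use ex_term.IH in blast)
  qed
next
  case (ex_union w1 L1 w2 L2)
  show ?case
  proof (intro allI impI)
    fix L' assume "re_expr (w1 @ [Plus] @ w2) L'"
    then show "L' = L1 \<union> L2"
    proof cases
      case ex_term
      then show ?thesis using re_term_not_union ex_union.hyps by auto
    next
      case (ex_union w1' L1' w2' L2')
      then have "w1' = w1 \<and> w2' = w2"
        using re_expr_union_split[OF ex_union(3,4) ex_union.hyps] by simp
      then show ?thesis using ex_union ex_union.IH by simp
    qed
  qed
qed (auto elim: re_atom.cases simp: append_eq_Cons_conv)

lemma re_expr_unique: "re_expr w L \<Longrightarrow> re_expr w L' \<Longrightarrow> L' = L"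
  using re_unique by blast

section \<open>Parse trees of G\<close>

lemma root_eq_T_iff [simp]: "root t = T x \<longleftrightarrow> t = Leaf x"
  by (cases t) auto

lemma valid_Node_iff: "valid k (Node A ts) \<longleftrightarrow> prod k A (map root ts) \<and> (\<forall>c\<in>set ts. valid k c)"
  by (auto elim: valid.cases intro: valid.intros)

lemma valid_rootE:
  assumes "valid k t" "root t = N A"
  obtains ts where "t = Node A ts" "prod k A (map root ts)" "\<forall>x\<in>set ts. valid k x"
  using assms by (cases t) (auto simp: valid_Node_iff)

(* The indexed variants E_i, Y_i, Y_i', Z_i exclude the letter a_i; the index is Some i, and None
   stands for the unindexed nonterminal. *)
fun E_of :: "nat option \<Rightarrow> nt" where "E_of None = NE" | "E_of (Some i) = NEi i"
fun Y_of :: "nat option \<Rightarrow> nt" where "Y_of None = NY" | "Y_of (Some i) = NYi i"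
fun Y'_of :: "nat option \<Rightarrow> nt" where "Y'_of None = NY'" | "Y'_of (Some i) = NYi' i"
fun Z_of :: "nat option \<Rightarrow> nt" where "Z_of None = NZ" | "Z_of (Some i) = NZi i"

lemma nt_family_cases:
  obtains (S) "A = NS" | (E) c where "A = E_of c" | (Y) c where "A = Y_of c"
  | (Y') c where "A = Y'_of c" | (Z) c where "A = Z_of c" | (P) i where "A = NP i \<or> A = NP' i"
  by (cases A) (metis E_of.simps Y_of.simps Y'_of.simps Z_of.simps)+

fun plus_sep :: "ptree list \<Rightarrow> ptree list" where
  "plus_sep [] = []"
| "plus_sep [q] = [q]"
| "plus_sep (q # qs) = q # Leaf Plus # plus_sep qs"

lemma map_root_eq_sum_rhs:
  assumes "map root ts = sum_rhs ns" "ns \<noteq> []"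
  obtains qs where "ts = plus_sep qs" "map root qs = map (\<lambda>n. N (NP' n)) ns"
  using assms
proof (induction ns arbitrary: ts thesis rule: sum_rhs.induct)
  case (2 n)
  then obtain q where "ts = [q]" "root q = N (NP' n)" by (auto simp: map_eq_Cons_conv)
  then show ?case using 2(1)[of "[q]"] by simp
next
  case (3 n m ms)
  then obtain q ts' where "ts = q # Leaf Plus # ts'" "root q = N (NP' n)"
    "map root ts' = sum_rhs (m # ms)"
    by (auto simp: map_eq_Cons_conv)
  moreover obtain qs where "ts' = plus_sep qs" "map root qs = map (\<lambda>n. N (NP' n)) (m # ms)"
    using 3(1) calculation(3) by blast
  ultimately show ?case using 3(2)[of "q # qs"] by (cases qs) auto
qed simp

lemma set_plus_sep: "set qs \<subseteq> set (plus_sep qs)" "set (plus_sep qs) \<subseteq> insert (Leaf Plus) (set qs)"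
  by (induction qs rule: plus_sep.induct) auto

lemma valid_P_cases:
  assumes "valid k t" "root t = N A" "A = NP i \<or> A = NP' i"
  obtains (letter) "t = Node A [Leaf (Sym i)]"
  | (letter_E) e where "t = Node A [Leaf (Sym i), e]" "valid k e" "root e = N NE"
  | (loop) j where "t = Node A [Leaf (Sym i), Leaf (Sym j), Leaf Star]" "A = NP' i \<Longrightarrow> j \<noteq> i"
  | (loop_E) j e where "t = Node A [Leaf (Sym i), Leaf (Sym j), Leaf Star, e]"
      "valid k e" "root e = N (NEi j)" "A = NP' i \<Longrightarrow> j \<noteq> i"
proof -
  obtain ts where t: "t = Node A ts" "prod k A (map root ts)" "\<forall>x\<in>set ts. valid k x"
    using assms(1,2) by (rule valid_rootE)
  from t(2) assms(3) show ?thesis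
    by (cases rule: prod.cases) (use t that in \<open>auto simp: map_eq_Cons_conv\<close>)
qed

lemma valid_Y_cases:
  assumes "valid k t" "root t = N (Y_of c)"
  obtains p l where "t = Node (Y_of c) [p]" "valid k p" "root p = N (NP l)" "c \<noteq> Some l"
proof -
  obtain ts where t: "t = Node (Y_of c) ts" "prod k (Y_of c) (map root ts)" "\<forall>x\<in>set ts. valid k x"
    using assms by (rule valid_rootE)
  from t(2) show ?thesis
    by (cases c; cases rule: prod.cases) (use t that in \<open>auto simp: map_eq_Cons_conv\<close>)
qed

lemma valid_Y'_cases:
  assumes "valid k t" "root t = N (Y'_of c)"
  obtains p l where "t = Node (Y'_of c) [p]" "valid k p" "root p = N (NP' l)" "c \<noteq> Some l"
proof -
  obtain ts where t: "t = Node (Y'_of c) ts" "prod k (Y'_of c) (map root ts)" "\<forall>x\<in>set ts. valid k x"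
    using assms by (rule valid_rootE)
  from t(2) show ?thesis
    by (cases c; cases rule: prod.cases) (use t that in \<open>auto simp: map_eq_Cons_conv\<close>)
qed

lemma valid_E_cases:
  assumes "valid k t" "root t = N (E_of c)"
  obtains (Y) y where "t = Node (E_of c) [y]" "valid k y" "root y = N (Y_of c)"
  | (Z) z where "t = Node (E_of c) [Leaf LP, z, Leaf RP]" "valid k z" "root z = N (Z_of c)"
  | (opt_Y') y where "t = Node (E_of c) [Leaf LP, Leaf Eps, Leaf Plus, y, Leaf RP]"
      "valid k y" "root y = N (Y'_of c)"
  | (opt_Z) z where "t = Node (E_of c) [Leaf LP, Leaf Eps, Leaf Plus, z, Leaf RP]"
      "valid k z" "root z = N (Z_of c)"
proof -
  obtain ts where t: "t = Node (E_of c) ts" "prod k (E_of c) (map root ts)" "\<forall>x\<in>set ts. valid k x"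
    using assms by (rule valid_rootE)
  from t(2) show ?thesis
    by (cases c; cases rule: prod.cases) (use t that in \<open>auto simp: map_eq_Cons_conv\<close>)
qed

lemma valid_Z_cases:
  assumes "valid k t" "root t = N (Z_of c)"
  obtains qs ns where "t = Node (Z_of c) (plus_sep qs)" "2 \<le> length qs" "sorted_wrt (<) ns"
    "map root qs = map (\<lambda>n. N (NP' n)) ns" "\<forall>q\<in>set qs. valid k q" "\<forall>n\<in>set ns. c \<noteq> Some n"
proof -
  obtain ts where t: "t = Node (Z_of c) ts" "prod k (Z_of c) (map root ts)" "\<forall>x\<in>set ts. valid k x"
    using assms by (rule valid_rootE)
  from t(2) obtain ns where ns: "map root ts = sum_rhs ns" "sorted_wrt (<) ns" "2 \<le> length ns"
    "\<forall>n\<in>set ns. c \<noteq> Some n"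
    by (cases c; cases rule: prod.cases) auto
  then obtain qs where qs: "ts = plus_sep qs" "map root qs = map (\<lambda>n. N (NP' n)) ns"
    by (auto elim: map_root_eq_sum_rhs)
  have "length qs = length ns" using arg_cong[OF qs(2), of length] by simp
  then show ?thesis
    using that[of qs ns] t qs ns set_plus_sep(1)[of qs] by auto
qed

lemma valid_S_cases:
  assumes "valid k t" "root t = N NS"
  obtains (Y) y where "t = Node NS [y]" "valid k y" "root y = N NY"
  | (Z) z where "t = Node NS [z]" "valid k z" "root z = N NZ"
proof -
  obtain ts where t: "t = Node NS ts" "prod k NS (map root ts)" "\<forall>x\<in>set ts. valid k x"
    using assms by (rule valid_rootE)
  from t(2) show ?thesis
    by (cases rule: prod.cases) (use t that in \<open>auto simp: map_eq_Cons_conv\<close>)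
qed

section \<open>The language of a parse tree\<close>

type_synonym lang = "nat list set"

(* A right-hand side rs read as a regular expression, where Ls lists the languages of the children
   (a letter denotes its singleton, the other terminals {}). Only the shapes occurring in G are
   told apart. *)
definition rhs_lang :: "gsym list \<Rightarrow> lang list \<Rightarrow> lang" where
  "rhs_lang rs Ls =
    (if length rs = 1 then Ls ! 0
     else if length rs = 2 then conc (Ls ! 0) (Ls ! 1)
     else if rs ! 0 = T LP then (if length rs = 3 then Ls ! 1 else insert [] (Ls ! 3))
     else if rs ! 1 = T Plus then \<Union> (set Ls)
     else if length rs = 3 then conc (Ls ! 0) (kstar (Ls ! 1))
     else conc (Ls ! 0) (conc (kstar (Ls ! 1)) (Ls ! 3)))"

fun sem :: "ptree \<Rightarrow> lang" where
  "sem (Leaf x) = (case x of Sym i \<Rightarrow> {[i]} | _ \<Rightarrow> {})"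
| "sem (Node A ts) = rhs_lang (map root ts) (map sem ts)"

declare sem.simps(2) [simp del]

lemma sem_Node_single [simp]: "sem (Node A [c]) = sem c"
  by (simp add: sem.simps rhs_lang_def)

lemma sem_Node_letter [simp]: "sem (Node A [Leaf (Sym i), e]) = conc {[i]} (sem e)"
  by (simp add: sem.simps rhs_lang_def)

lemma sem_Node_par [simp]: "sem (Node A [Leaf LP, z, Leaf RP]) = sem z"
  by (simp add: sem.simps rhs_lang_def)

lemma sem_Node_opt [simp]: "sem (Node A [Leaf LP, Leaf Eps, Leaf Plus, y, Leaf RP]) = insert [] (sem y)"
  by (simp add: sem.simps rhs_lang_def)

lemma sem_Node_loop [simp]:
  "sem (Node A [Leaf (Sym i), Leaf (Sym j), Leaf Star]) = conc {[i]} (kstar {[j]})"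
  by (simp add: sem.simps rhs_lang_def)

lemma sem_Node_loop_E [simp]:
  "sem (Node A [Leaf (Sym i), Leaf (Sym j), Leaf Star, e]) = conc {[i]} (conc (kstar {[j]}) (sem e))"
  by (simp add: sem.simps rhs_lang_def)

lemma sem_Node_plus_sep:
  assumes "2 \<le> length qs" "hd qs \<noteq> Leaf LP"
  shows "sem (Node A (plus_sep qs)) = (\<Union>q\<in>set qs. sem q)"
proof -
  obtain q q' qs' where qs: "qs = q # q' # qs'"
    using assms(1) by (metis Suc_le_length_iff numeral_2_eq_2)
  have "sem (Node A (plus_sep qs)) = \<Union> (sem ` set (plus_sep qs))"
    using assms(2) by (cases qs') (simp_all add: qs sem.simps rhs_lang_def)
  also have "\<dots> = (\<Union>q\<in>set qs. sem q)"
  proof (rule equalityI)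
    have "sem ` set (plus_sep qs) \<subseteq> insert {} (sem ` set qs)"
      using image_mono[OF set_plus_sep(2), of sem qs] by simp
    then show "\<Union> (sem ` set (plus_sep qs)) \<subseteq> (\<Union>q\<in>set qs. sem q)"
      by (metis Sup_insert Union_mono sup_bot.left_neutral)
  qed (use image_mono[OF set_plus_sep(1), of sem qs] in \<open>rule Union_mono\<close>)
  finally show ?thesis .
qed

lemma sem_Z_node:
  assumes "2 \<le> length qs" "map root qs = map (\<lambda>n. N (NP' n)) ns" "sorted_wrt (<) ns"
  shows "sem (Node A (plus_sep qs)) = (\<Union>m\<in>{..<length qs}. sem (qs ! m))"
    and "length ns = length qs" "\<forall>m<length qs. root (qs ! m) = N (NP' (ns ! m))"
    and "inj_on ((!) ns) {..<length qs}" "(!) ns ` {..<length qs} = set ns"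
proof -
  show len: "length ns = length qs" using arg_cong[OF assms(2), of length] by simp
  have "hd qs \<noteq> Leaf LP" using assms(1,2) by (cases qs) auto
  moreover have "set qs = (!) qs ` {..<length qs}" by (auto simp: in_set_conv_nth)
  ultimately show "sem (Node A (plus_sep qs)) = (\<Union>m\<in>{..<length qs}. sem (qs ! m))"
    using sem_Node_plus_sep[OF assms(1)] by (simp add: image_image)
  show "\<forall>m<length qs. root (qs ! m) = N (NP' (ns ! m))"
    using len nth_map[of _ qs root] nth_map[of _ ns "\<lambda>n. N (NP' n)"] assms(2) by metis
  show "inj_on ((!) ns) {..<length qs}"
    using assms(3) len by (intro inj_on_nth) (auto simp: strict_sorted_iff)
  show "(!) ns ` {..<length qs} = set ns" using len by (auto simp: in_set_conv_nth)
qed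

section \<open>The yield of a parse tree reads as its language\<close>

lemma conc_assoc: "conc (conc A B) C = conc A (conc B C)"
  unfolding conc_def by (auto, metis append.assoc, metis append.assoc)

lemma re_term_conc:
  assumes "re_term w2 L2" "re_term w1 L1" shows "re_term (w1 @ w2) (conc L1 L2)"
  using assms
proof (induction "length w2" arbitrary: w2 L2 rule: less_induct)
  case less
  from less.prems(1) show ?case
  proof cases
    case (te_conc w3 L3 w4 L4)
    have "length w3 < length w2" using te_conc re_factor_wf[OF te_conc(4)] by simp
    then have "re_term (w1 @ w3) (conc L1 L3)" using less te_conc by blast
    then have "re_term ((w1 @ w3) @ w4) (conc (conc L1 L3) L4)"
      using te_conc(4) by (rule re_atom_re_factor_re_term_re_expr.te_conc)
    then show ?thesis using te_conc by (simp add: conc_assoc)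
  qed (use less.prems(2) re_atom_re_factor_re_term_re_expr.te_conc in blast)
qed

lemma re_expr_union:
  assumes "re_expr w2 L2" "re_term w1 L1" shows "re_expr (w1 @ Plus # w2) (L1 \<union> L2)"
  using assms
proof (induction "length w2" arbitrary: w2 L2 rule: less_induct)
  case less
  from less.prems(1) show ?case
  proof cases
    case ex_term
    then show ?thesis using ex_union[OF re_atom_re_factor_re_term_re_expr.ex_term[OF less.prems(2)]]
      by simp
  next
    case (ex_union w3 L3 w4 L4)
    then have "re_expr (w1 @ Plus # w3) (L1 \<union> L3)" using less by simp
    then have "re_expr ((w1 @ Plus # w3) @ [Plus] @ w4) ((L1 \<union> L3) \<union> L4)"
      using ex_union(4) by (rule re_atom_re_factor_re_term_re_expr.ex_union)
    then show ?thesis using ex_union by (simp add: Un_assoc)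
  qed
qed

lemma re_expr_plus_sep:
  "qs \<noteq> [] \<Longrightarrow> \<forall>q\<in>set qs. re_term (yield q) (sem q)
    \<Longrightarrow> re_expr (concat (map yield (plus_sep qs))) (\<Union>q\<in>set qs. sem q)"
  by (induction qs rule: plus_sep.induct) (auto intro: ex_term re_expr_union)

lemma re_term_par: "re_expr w L \<Longrightarrow> re_term (LP # w @ [RP]) L"
  using te_factor[OF fa_atom[OF at_par]] by simp

lemma re_term_letter: "re_term [Sym i] {[i]}"
  by (intro te_factor fa_atom at_sym)

lemma re_term_eps: "re_term [Eps] {[]}"
  by (intro te_factor fa_atom at_eps)

lemma re_term_loop: "re_term [Sym i, Sym j, Star] (conc {[i]} (kstar {[j]}))"
  using te_conc[OF re_term_letter fa_star[OF at_sym]] by simp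

fun re_nt :: "nt \<Rightarrow> tm list \<Rightarrow> lang \<Rightarrow> bool" where
  "re_nt NS = re_expr"
| "re_nt NZ = re_expr"
| "re_nt (NZi i) = re_expr"
| "re_nt _ = re_term"

lemma re_nt_families [simp]:
  "re_nt (E_of c) = re_term" "re_nt (Y_of c) = re_term" "re_nt (Y'_of c) = re_term"
  "re_nt (Z_of c) = re_expr"
  by (cases c; simp)+

lemma re_expr_S_node:
  assumes "valid k (Node NS ts)"
    and children: "\<And>x B. x \<in> set ts \<Longrightarrow> valid k x \<Longrightarrow> root x = N B \<Longrightarrow> re_nt B (yield x) (sem x)"
  shows "re_expr (yield (Node NS ts)) (sem (Node NS ts))"
  using assms(1) root.simps(2)
  by (cases rule: valid_S_cases) (use children in \<open>auto intro: ex_term\<close>)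

lemma re_term_E_node:
  assumes "valid k (Node (E_of c) ts)"
    and children: "\<And>x B. x \<in> set ts \<Longrightarrow> valid k x \<Longrightarrow> root x = N B \<Longrightarrow> re_nt B (yield x) (sem x)"
  shows "re_term (yield (Node (E_of c) ts)) (sem (Node (E_of c) ts))"
  using assms(1) root.simps(2)
proof (cases rule: valid_E_cases)
  case (Y y)
  then show ?thesis using children[of y] by simp
next
  case (Z z)
  then show ?thesis using children[of z] re_term_par by simp
next
  case (opt_Y' y)
  then have "re_term (yield y) (sem y)" using children[of y] by simp
  then have "re_expr ([Eps] @ [Plus] @ yield y) ({[]} \<union> sem y)"
    by (rule ex_union[OF ex_term[OF re_term_eps]])
  then have "re_term (LP # ([Eps] @ [Plus] @ yield y) @ [RP]) ({[]} \<union> sem y)"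
    by (rule re_term_par)
  then show ?thesis using opt_Y' by simp
next
  case (opt_Z z)
  then have "re_expr (yield z) (sem z)" using children[of z] by simp
  then have "re_expr ([Eps] @ Plus # yield z) ({[]} \<union> sem z)"
    using re_term_eps by (rule re_expr_union)
  then have "re_term (LP # ([Eps] @ Plus # yield z) @ [RP]) ({[]} \<union> sem z)"
    by (rule re_term_par)
  then show ?thesis using opt_Z by simp
qed

lemma re_term_Y_node:
  assumes "valid k (Node A ts)" "A = Y_of c \<or> A = Y'_of c"
    and children: "\<And>x B. x \<in> set ts \<Longrightarrow> valid k x \<Longrightarrow> root x = N B \<Longrightarrow> re_nt B (yield x) (sem x)"
  shows "re_term (yield (Node A ts)) (sem (Node A ts))"
proof -
  obtain p l where "ts = [p]" "valid k p" "root p = N (NP l) \<or> root p = N (NP' l)"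
    using assms(2)
  proof
    assume A: "A = Y_of c"
    from assms(1)[unfolded A] root.simps(2) show ?thesis
      by (cases rule: valid_Y_cases) (use that in auto)
  next
    assume A: "A = Y'_of c"
    from assms(1)[unfolded A] root.simps(2) show ?thesis
      by (cases rule: valid_Y'_cases) (use that in auto)
  qed
  then show ?thesis using children[of p] by auto
qed

lemma re_expr_Z_node:
  assumes "valid k (Node (Z_of c) ts)"
    and children: "\<And>x B. x \<in> set ts \<Longrightarrow> valid k x \<Longrightarrow> root x = N B \<Longrightarrow> re_nt B (yield x) (sem x)"
  shows "re_expr (yield (Node (Z_of c) ts)) (sem (Node (Z_of c) ts))"
  using assms(1) root.simps(2)
proof (cases rule: valid_Z_cases)
  case (1 qs ns)
  have "re_term (yield q) (sem q)" if "q \<in> set qs" for q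
  proof -
    have "root q \<in> set (map root qs)" using that by simp
    then obtain n where "root q = N (NP' n)" using 1(4) by auto
    moreover have "q \<in> set ts" using that 1(1) set_plus_sep(1) by auto
    ultimately show ?thesis using children 1(5) that by fastforce
  qed
  moreover have "qs \<noteq> []" "hd qs \<noteq> Leaf LP"
    using 1(2,4) by (cases qs; auto)+
  ultimately show ?thesis
    using 1 re_expr_plus_sep[of qs] sem_Node_plus_sep[of qs] by simp
qed

lemma re_term_P_node:
  assumes "valid k (Node A ts)" "A = NP i \<or> A = NP' i"
    and children: "\<And>x B. x \<in> set ts \<Longrightarrow> valid k x \<Longrightarrow> root x = N B \<Longrightarrow> re_nt B (yield x) (sem x)"
  shows "re_term (yield (Node A ts)) (sem (Node A ts))"
  using assms(1) root.simps(2) assms(2)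
proof (cases rule: valid_P_cases)
  case (letter_E e)
  then have "re_term (yield e) (sem e)" using children[of e NE] by simp
  from re_term_conc[OF this re_term_letter] show ?thesis using letter_E by simp
next
  case (loop_E j e)
  then have "re_term (yield e) (sem e)" using children[of e "NEi j"] by simp
  from re_term_conc[OF this re_term_loop] show ?thesis using loop_E by (simp add: conc_assoc)
qed (simp_all add: re_term_letter re_term_loop)

lemma valid_re_nt:
  assumes "valid k t" "root t = N A" shows "re_nt A (yield t) (sem t)"
  using assms
proof (induction t arbitrary: A rule: ptree.induct)
  case (Node B ts)
  then have [simp]: "B = A" by simp
  have t: "valid k (Node A ts)" using Node.prems by simp
  show ?case
  proof (cases A rule: nt_family_cases)
    case S
    then show ?thesis using re_expr_S_node t Node.IH by simp
  next
    case (E c)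
    then show ?thesis using re_term_E_node t Node.IH by simp
  next
    case (Y c)
    then show ?thesis using re_term_Y_node[OF t, of c] Node.IH by simp
  next
    case (Y' c)
    then show ?thesis using re_term_Y_node[OF t, of c] Node.IH by simp
  next
    case (Z c)
    then show ?thesis using re_expr_Z_node t Node.IH by simp
  next
    case (P i)
    then show ?thesis using re_term_P_node[OF t] Node.IH by auto
  qed
qed simp

section \<open>Left quotients and initial letters\<close>

definition Deriv :: "nat \<Rightarrow> lang \<Rightarrow> lang" where
  "Deriv a L = {w. a # w \<in> L}"

definition initials :: "lang \<Rightarrow> nat set" where
  "initials L = {a. Deriv a L \<noteq> {}}"

lemma Deriv_empty [simp]: "Deriv a {} = {}"
  unfolding Deriv_def by simp

lemma conc_singleton [simp]: "conc {[a]} L = (#) a ` L"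
  unfolding conc_def by auto

lemma in_kstar_singleton_iff: "w \<in> kstar {[j]} \<longleftrightarrow> set w \<subseteq> {j}"
proof
  show "w \<in> kstar {[j]} \<Longrightarrow> set w \<subseteq> {j}" by (induction rule: kstar.induct) auto
  show "set w \<subseteq> {j} \<Longrightarrow> w \<in> kstar {[j]}"
    by (induction w) (auto intro: kstar.intros kstar.intros(2)[of "[_]", simplified])
qed

lemma Nil_in_kstar [simp]: "[] \<in> kstar A"
  by (rule kstar.intros)

lemma kstar_neq_empty [simp]: "kstar A \<noteq> {}"
  using Nil_in_kstar by blast

lemma subset_conc_kstar: "M \<subseteq> conc (kstar A) M"
  unfolding conc_def by force

lemma Nil_notin_image_Cons [simp]: "[] \<notin> (#) a ` L"
  by auto

lemma Deriv_image_Cons [simp]: "Deriv a ((#) i ` L) = (if a = i then L else {})"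
  unfolding Deriv_def by auto

lemma Deriv_singleton [simp]: "Deriv a {[b]} = (if a = b then {[]} else {})"
  unfolding Deriv_def by auto

lemma Deriv_insert_Nil [simp]: "Deriv a (insert [] L) = Deriv a L"
  unfolding Deriv_def by auto

lemma Deriv_UN [simp]: "Deriv a (\<Union>i\<in>I. L i) = (\<Union>i\<in>I. Deriv a (L i))"
  unfolding Deriv_def by auto

lemma Deriv_kstar_singleton: "Deriv a (kstar {[j]}) = (if a = j then kstar {[j]} else {})"
  unfolding Deriv_def by (auto simp: in_kstar_singleton_iff)

lemma Deriv_conc_kstar_singleton:
  "Deriv a (conc (kstar {[j]}) M) = (if a = j then conc (kstar {[j]}) M \<union> Deriv a M else Deriv a M)"
proof -
  have "a # w \<in> conc (kstar {[j]}) M \<longleftrightarrow> a = j \<and> w \<in> conc (kstar {[j]}) M \<or> a # w \<in> M" for w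
  proof
    assume "a # w \<in> conc (kstar {[j]}) M"
    then obtain u v where uv: "a # w = u @ v" "set u \<subseteq> {j}" "v \<in> M"
      unfolding conc_def by (auto simp: in_kstar_singleton_iff)
    then show "a = j \<and> w \<in> conc (kstar {[j]}) M \<or> a # w \<in> M"
      by (cases u) (auto simp: conc_def in_kstar_singleton_iff)
  next
    assume "a = j \<and> w \<in> conc (kstar {[j]}) M \<or> a # w \<in> M"
    then show "a # w \<in> conc (kstar {[j]}) M"
    proof
      assume "a = j \<and> w \<in> conc (kstar {[j]}) M"
      then obtain u v where "w = u @ v" "set u \<subseteq> {j}" "v \<in> M" "a = j"
        unfolding conc_def by (auto simp: in_kstar_singleton_iff)
      then have "a # w = (j # u) @ v" "j # u \<in> kstar {[j]}" "v \<in> M"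
        by (auto simp: in_kstar_singleton_iff)
      then show ?thesis unfolding conc_def by blast
    qed (use subset_conc_kstar in blast)
  qed
  then show ?thesis unfolding Deriv_def by auto
qed

lemma conc_kstar_singleton_cancel:
  assumes "conc (kstar {[j]}) M = conc (kstar {[j]}) M'" "j \<notin> initials M" "j \<notin> initials M'"
  shows "M = M'"
proof -
  have strip: "M = {w \<in> conc (kstar {[j]}) M. w = [] \<or> hd w \<noteq> j}" if "j \<notin> initials M" for M
  proof (intro equalityI subsetI)
    fix w assume "w \<in> M"
    with that show "w \<in> {w \<in> conc (kstar {[j]}) M. w = [] \<or> hd w \<noteq> j}"
      using subset_conc_kstar by (cases w) (auto simp: initials_def Deriv_def)
  next
    fix w assume "w \<in> {w \<in> conc (kstar {[j]}) M. w = [] \<or> hd w \<noteq> j}"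
    then obtain u v where "w = u @ v" "set u \<subseteq> {j}" "v \<in> M" "w = [] \<or> hd w \<noteq> j"
      unfolding conc_def by (auto simp: in_kstar_singleton_iff)
    then show "w \<in> M" by (cases u) auto
  qed
  show ?thesis using strip[OF assms(2)] strip[OF assms(3)] assms(1) by simp
qed

lemma initials_empty [simp]: "initials {} = {}"
  unfolding initials_def Deriv_def by simp

lemma initials_singleton [simp]: "initials {[i]} = {i}"
  unfolding initials_def by auto

lemma initials_Nil [simp]: "initials {[]} = {}"
  unfolding initials_def Deriv_def by auto

lemma initials_image_Cons [simp]: "initials ((#) i ` L) = (if L = {} then {} else {i})"
  unfolding initials_def by auto

lemma initials_insert_Nil [simp]: "initials (insert [] L) = initials L"
  unfolding initials_def by simp

lemma initials_UN [simp]: "initials (\<Union>i\<in>I. L i) = (\<Union>i\<in>I. initials (L i))"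
  unfolding initials_def by auto

lemma image_Cons_Deriv:
  assumes "[] \<notin> L" "initials L \<subseteq> {a}" shows "(#) a ` Deriv a L = L"
proof (intro equalityI subsetI)
  fix w assume w: "w \<in> L"
  then obtain b v where "w = b # v" using assms(1) by (cases w) auto
  moreover have "b \<in> initials L" using w \<open>w = b # v\<close> unfolding initials_def Deriv_def by auto
  ultimately show "w \<in> (#) a ` Deriv a L" using w assms(2) unfolding Deriv_def by auto
qed (auto simp: Deriv_def)

definition no_loop_tail :: "lang \<Rightarrow> bool" where
  "no_loop_tail L \<longleftrightarrow> (\<forall>l. Deriv l L \<noteq> {} \<longrightarrow> Deriv l (Deriv l L) \<noteq> Deriv l L)"

definition loop_tail_initial :: "lang \<Rightarrow> bool" where
  "loop_tail_initial L \<longleftrightarrow>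
    (\<forall>l. Deriv l L \<noteq> {} \<longrightarrow> Deriv l (Deriv l L) = Deriv l L \<longrightarrow> L = (#) l ` Deriv l L)"

lemma subset_conc_image_Cons_empty:
  assumes "X \<subseteq> conc B ((#) l ` X)" shows "X = {}"
proof -
  have "w \<notin> X" for w
  proof (induction "length w" arbitrary: w rule: less_induct)
    case less
    show ?case
    proof
      assume "w \<in> X"
      then obtain u v where "w = u @ l # v" "v \<in> X" using assms unfolding conc_def by blast
      then show False using less by simp
    qed
  qed
  then show ?thesis by blast
qed

lemma no_loop_tail_image_Cons [simp]:
  "no_loop_tail ((#) i ` X) \<longleftrightarrow> (X \<noteq> {} \<longrightarrow> Deriv i X \<noteq> X)"
  by (auto simp: no_loop_tail_def)

lemma no_loop_tail_insert_Nil [simp]: "no_loop_tail (insert [] L) = no_loop_tail L"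
  by (simp add: no_loop_tail_def)

lemma loop_tail_initial_if_no_loop_tail: "no_loop_tail L \<Longrightarrow> loop_tail_initial L"
  by (simp add: no_loop_tail_def loop_tail_initial_def)

lemma loop_tail_initial_single:
  assumes "[] \<notin> L" "initials L = {a}" shows "loop_tail_initial L"
  unfolding loop_tail_initial_def
proof (intro allI impI)
  fix l assume "Deriv l L \<noteq> {}"
  then have "l = a" using assms(2) unfolding initials_def by auto
  then show "L = (#) l ` Deriv l L" using image_Cons_Deriv assms by simp
qed

lemma Deriv_loop_tail_neq:
  assumes "loop_tail_initial X" "X \<noteq> {}" shows "Deriv l X \<noteq> X"
proof
  assume loop: "Deriv l X = X"
  then have "X = (#) l ` X" using assms unfolding loop_tail_initial_def by metis
  then have "X \<subseteq> conc (kstar {}) ((#) l ` X)" using subset_conc_kstar by blast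
  then show False using subset_conc_image_Cons_empty assms(2) by blast
qed

lemma Deriv_conc_kstar_loop_tail_neq:
  assumes "loop_tail_initial M" "M \<noteq> {}" "l \<noteq> j"
  shows "Deriv l (conc (kstar {[j]}) M) \<noteq> conc (kstar {[j]}) M" (is "_ \<noteq> ?T")
proof
  assume loop: "Deriv l ?T = ?T"
  then have tail: "Deriv l M = ?T" using assms(3) by (simp add: Deriv_conc_kstar_singleton)
  moreover have "?T \<noteq> {}" using assms(2) subset_conc_kstar by blast
  ultimately have "M = (#) l ` ?T" using assms(1) loop unfolding loop_tail_initial_def by metis
  then have "?T = conc (kstar {[j]}) ((#) l ` ?T)" by simp
  then show False using subset_conc_image_Cons_empty \<open>?T \<noteq> {}\<close> by blast
qed

lemma UN_initial_components:
  assumes "\<And>j. j \<in> I \<Longrightarrow> [] \<notin> L j \<and> initials (L j) = {a j}" "inj_on a I"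
  shows "[] \<notin> (\<Union>j\<in>I. L j)" "initials (\<Union>j\<in>I. L j) = a ` I"
    and "\<And>i. i \<in> I \<Longrightarrow> Deriv (a i) (\<Union>j\<in>I. L j) = Deriv (a i) (L i)"
proof -
  show "[] \<notin> (\<Union>j\<in>I. L j)" "initials (\<Union>j\<in>I. L j) = a ` I" using assms(1) by auto
  show "Deriv (a i) (\<Union>j\<in>I. L j) = Deriv (a i) (L i)" if "i \<in> I" for i
  proof -
    have "Deriv (a i) (L j) = {}" if "j \<in> I" "j \<noteq> i" for j
    proof -
      have "a i \<notin> initials (L j)"
        using assms(1)[OF that(1)] inj_onD[OF assms(2) _ that(1) \<open>i \<in> I\<close>] that(2) by auto
      then show ?thesis unfolding initials_def by simp
    qed
    then show ?thesis using that by auto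
  qed
qed

lemma no_loop_tail_UN_initial_components:
  assumes "\<And>j. j \<in> I \<Longrightarrow> [] \<notin> L j \<and> initials (L j) = {a j}" "inj_on a I"
    and "\<And>j. j \<in> I \<Longrightarrow> no_loop_tail (L j)"
  shows "no_loop_tail (\<Union>j\<in>I. L j)"
  unfolding no_loop_tail_def
proof (intro allI impI)
  fix l assume "Deriv l (\<Union>j\<in>I. L j) \<noteq> {}"
  then have "l \<in> a ` I" using UN_initial_components(2)[OF assms(1,2)] unfolding initials_def by blast
  then obtain i where "i \<in> I" "l = a i" by blast
  then show "Deriv l (Deriv l (\<Union>j\<in>I. L j)) \<noteq> Deriv l (\<Union>j\<in>I. L j)"
    using UN_initial_components(3)[OF assms(1,2)] assms(3) \<open>Deriv l _ \<noteq> {}\<close>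
    unfolding no_loop_tail_def by metis
qed


section \<open>Invariants of the languages of subtrees\<close>

fun lang_inv :: "nt \<Rightarrow> lang \<Rightarrow> bool" where
  "lang_inv (NP i) L \<longleftrightarrow> [] \<notin> L \<and> initials L = {i}"
| "lang_inv (NP' i) L \<longleftrightarrow> [] \<notin> L \<and> initials L = {i} \<and> no_loop_tail L"
| "lang_inv NY L \<longleftrightarrow> [] \<notin> L \<and> (\<exists>l. initials L = {l})"
| "lang_inv (NYi x) L \<longleftrightarrow> [] \<notin> L \<and> (\<exists>l. initials L = {l} \<and> l \<noteq> x)"
| "lang_inv NY' L \<longleftrightarrow> [] \<notin> L \<and> (\<exists>l. initials L = {l}) \<and> no_loop_tail L"
| "lang_inv (NYi' x) L \<longleftrightarrow> [] \<notin> L \<and> (\<exists>l. initials L = {l} \<and> l \<noteq> x) \<and> no_loop_tail L"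
| "lang_inv NE L \<longleftrightarrow> initials L \<noteq> {} \<and> loop_tail_initial L"
| "lang_inv (NEi x) L \<longleftrightarrow> initials L \<noteq> {} \<and> x \<notin> initials L \<and> loop_tail_initial L"
| "lang_inv NZ L \<longleftrightarrow> [] \<notin> L \<and> (\<forall>l. \<not> initials L \<subseteq> {l}) \<and> no_loop_tail L"
| "lang_inv (NZi x) L \<longleftrightarrow>
     [] \<notin> L \<and> (\<forall>l. \<not> initials L \<subseteq> {l}) \<and> x \<notin> initials L \<and> no_loop_tail L"
| "lang_inv NS L \<longleftrightarrow> True"

lemma lang_inv_families [simp]:
  "lang_inv (Y_of c) L \<longleftrightarrow> [] \<notin> L \<and> (\<exists>l. initials L = {l} \<and> c \<noteq> Some l)"
  "lang_inv (Y'_of c) L \<longleftrightarrow> [] \<notin> L \<and> (\<exists>l. initials L = {l} \<and> c \<noteq> Some l) \<and> no_loop_tail L"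
  "lang_inv (E_of c) L \<longleftrightarrow>
     initials L \<noteq> {} \<and> set_option c \<inter> initials L = {} \<and> loop_tail_initial L"
  "lang_inv (Z_of c) L \<longleftrightarrow>
     [] \<notin> L \<and> (\<forall>l. \<not> initials L \<subseteq> {l}) \<and> set_option c \<inter> initials L = {} \<and> no_loop_tail L"
  by (cases c; auto)+

lemma lang_inv_P:
  assumes "A = NP i \<or> A = NP' i"
  shows "lang_inv A L \<longleftrightarrow> [] \<notin> L \<and> initials L = {i} \<and> (A = NP' i \<longrightarrow> no_loop_tail L)"
  using assms by auto

lemma lang_inv_E_node:
  assumes "valid k (Node (E_of c) ts)"
    and children: "\<And>x B. x \<in> set ts \<Longrightarrow> valid k x \<Longrightarrow> root x = N B \<Longrightarrow> lang_inv B (sem x)"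
  shows "lang_inv (E_of c) (sem (Node (E_of c) ts))"
  using assms(1) root.simps(2)
proof (cases rule: valid_E_cases)
  case (Y y)
  then show ?thesis using children[of y] loop_tail_initial_single by auto
next
  case (Z z)
  then show ?thesis using children[of z] loop_tail_initial_if_no_loop_tail by auto
next
  case (opt_Y' y)
  then show ?thesis using children[of y] loop_tail_initial_if_no_loop_tail by auto
next
  case (opt_Z z)
  then show ?thesis using children[of z] loop_tail_initial_if_no_loop_tail by auto
qed

lemma lang_inv_Y_node:
  assumes "valid k (Node A ts)" "A = Y_of c \<or> A = Y'_of c"
    and children: "\<And>x B. x \<in> set ts \<Longrightarrow> valid k x \<Longrightarrow> root x = N B \<Longrightarrow> lang_inv B (sem x)"
  shows "lang_inv A (sem (Node A ts))"
  using assms(2)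
proof
  assume A: "A = Y_of c"
  from assms(1)[unfolded A] root.simps(2) show ?thesis
  proof (cases rule: valid_Y_cases)
    case (1 p l)
    then show ?thesis using children[of p "NP l"] A by auto
  qed
next
  assume A: "A = Y'_of c"
  from assms(1)[unfolded A] root.simps(2) show ?thesis
  proof (cases rule: valid_Y'_cases)
    case (1 p l)
    then show ?thesis using children[of p "NP' l"] A by auto
  qed
qed

lemma lang_inv_Z_node:
  assumes "valid k (Node (Z_of c) ts)"
    and children: "\<And>x B. x \<in> set ts \<Longrightarrow> valid k x \<Longrightarrow> root x = N B \<Longrightarrow> lang_inv B (sem x)"
  shows "lang_inv (Z_of c) (sem (Node (Z_of c) ts))"
  using assms(1) root.simps(2)
proof (cases rule: valid_Z_cases)
  case (1 qs ns)
  note Z = sem_Z_node[OF 1(2,4,3)]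
  have child: "[] \<notin> sem (qs ! m) \<and> initials (sem (qs ! m)) = {ns ! m} \<and> no_loop_tail (sem (qs ! m))"
    if "m \<in> {..<length qs}" for m
  proof -
    have "m < length qs" using that by simp
    then have "qs ! m \<in> set ts" using 1(1) set_plus_sep(1) nth_mem by blast
    then show ?thesis using children[of "qs ! m" "NP' (ns ! m)"] 1(5) Z(3) \<open>m < length qs\<close> by simp
  qed
  have sem_Z: "sem (Node (Z_of c) ts) = (\<Union>m\<in>{..<length qs}. sem (qs ! m))"
    using Z(1) 1(1) by simp
  have "\<not> set ns \<subseteq> {l}" for l
  proof -
    obtain n n' ns' where "ns = n # n' # ns'"
      using 1(2) Z(2) by (metis Suc_le_length_iff numeral_2_eq_2)
    then show ?thesis using 1(3) by auto
  qed
  moreover note UN_initial_components[of "{..<length qs}" "\<lambda>m. sem (qs ! m)", OF _ Z(4)]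
    and no_loop_tail_UN_initial_components[of "{..<length qs}" "\<lambda>m. sem (qs ! m)", OF _ Z(4)]
  ultimately show ?thesis using child sem_Z Z(5) 1(6) by auto
qed

lemma lang_inv_P_node:
  assumes "valid k (Node A ts)" "A = NP i \<or> A = NP' i"
    and children: "\<And>x B. x \<in> set ts \<Longrightarrow> valid k x \<Longrightarrow> root x = N B \<Longrightarrow> lang_inv B (sem x)"
  shows "lang_inv A (sem (Node A ts))"
proof -
  have inv: "lang_inv A L \<longleftrightarrow> [] \<notin> L \<and> initials L = {i} \<and> (A = NP' i \<longrightarrow> no_loop_tail L)" for L
    using assms(2) by (rule lang_inv_P)
  from assms(1) root.simps(2) assms(2) show ?thesis
  proof (cases rule: valid_P_cases)
    case letter
    then show ?thesis by (simp add: inv no_loop_tail_def Deriv_def)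
  next
    case (letter_E e)
    then have "initials (sem e) \<noteq> {}" "loop_tail_initial (sem e)" using children[of e NE] by auto
    then show ?thesis using letter_E Deriv_loop_tail_neq by (auto simp: inv)
  next
    case (loop j)
    then show ?thesis by (auto simp: inv Deriv_kstar_singleton dest: sym)
  next
    case (loop_E j e)
    then have e: "sem e \<noteq> {}" "loop_tail_initial (sem e)" using children[of e "NEi j"] by auto
    then have "conc (kstar {[j]}) (sem e) \<noteq> {}" using subset_conc_kstar by blast
    moreover have "Deriv i (conc (kstar {[j]}) (sem e)) \<noteq> conc (kstar {[j]}) (sem e)"
      if "A = NP' i"
      using Deriv_conc_kstar_loop_tail_neq[OF e(2,1) not_sym[OF loop_E(4)[OF that]]] .
    ultimately show ?thesis using loop_E by (simp add: inv)
  qed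
qed

lemma valid_lang_inv:
  assumes "valid k t" "root t = N A" shows "lang_inv A (sem t)"
  using assms
proof (induction t arbitrary: A rule: ptree.induct)
  case (Node B ts)
  then have [simp]: "B = A" by simp
  have t: "valid k (Node A ts)" using Node.prems by simp
  show ?case
  proof (cases A rule: nt_family_cases)
    case (E c)
    then show ?thesis using lang_inv_E_node t Node.IH by simp
  next
    case (Y c)
    then show ?thesis using lang_inv_Y_node[OF t, of c] Node.IH by simp
  next
    case (Y' c)
    then show ?thesis using lang_inv_Y_node[OF t, of c] Node.IH by simp
  next
    case (Z c)
    then show ?thesis using lang_inv_Z_node t Node.IH by simp
  next
    case (P i)
    then show ?thesis using lang_inv_P_node[OF t P] Node.IH by simp
  qed simp
qed simp

section \<open>A parse tree is determined by its language\<close>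

lemma valid_P_lang:
  assumes "valid k t" "root t = N A" "A = NP i \<or> A = NP' i"
  shows "[] \<notin> sem t" "initials (sem t) = {i}"
  using valid_lang_inv[OF assms(1,2)] lang_inv_P[OF assms(3)] by auto

lemma valid_E_lang:
  assumes "valid k t" "root t = N (E_of c)"
  shows "initials (sem t) \<noteq> {}" "set_option c \<inter> initials (sem t) = {}" "loop_tail_initial (sem t)"
  using valid_lang_inv[OF assms] by auto

definition loop_letters :: "lang \<Rightarrow> nat set" where
  "loop_letters X = {l. Deriv l X = X}"

lemma P_tail_cases:
  assumes "valid k t" "root t = N A" "A = NP i \<or> A = NP' i"
  obtains (letter) "t = Node A [Leaf (Sym i)]" "initials (Deriv i (sem t)) = {}"
  | (letter_E) e where "t = Node A [Leaf (Sym i), e]" "valid k e" "root e = N NE"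
      "sem e = Deriv i (sem t)" "initials (Deriv i (sem t)) \<noteq> {}" "loop_letters (Deriv i (sem t)) = {}"
  | (loop) j where "t = Node A [Leaf (Sym i), Leaf (Sym j), Leaf Star]"
      "initials (Deriv i (sem t)) \<noteq> {}" "loop_letters (Deriv i (sem t)) = {j}"
      "initials (Deriv i (sem t)) \<subseteq> {j}"
  | (loop_E) j e where "t = Node A [Leaf (Sym i), Leaf (Sym j), Leaf Star, e]" "valid k e"
      "root e = N (NEi j)" "conc (kstar {[j]}) (sem e) = Deriv i (sem t)" "j \<notin> initials (sem e)"
      "initials (Deriv i (sem t)) \<noteq> {}" "loop_letters (Deriv i (sem t)) = {j}"
      "\<not> initials (Deriv i (sem t)) \<subseteq> {j}"
  using assms
proof (cases rule: valid_P_cases)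
  case letter
  then show ?thesis using that(1) by simp
next
  case (letter_E e)
  have e: "initials (sem e) \<noteq> {}" "loop_tail_initial (sem e)"
    using valid_E_lang[of k e None] letter_E by auto
  then have "sem e \<noteq> {}" by auto
  then show ?thesis
    using that(2)[OF letter_E] letter_E(1) e Deriv_loop_tail_neq[OF e(2)] by (simp add: loop_letters_def)
next
  case (loop j)
  have "j \<in> initials (kstar {[j]})" by (auto simp: initials_def Deriv_kstar_singleton)
  moreover have "initials (kstar {[j]}) \<subseteq> {j}" by (auto simp: initials_def Deriv_kstar_singleton)
  moreover have "loop_letters (kstar {[j]}) = {j}"
    by (auto simp: loop_letters_def Deriv_kstar_singleton) (metis kstar_neq_empty)
  ultimately show ?thesis using that(3)[OF loop(1)] loop(1) by auto
next
  case (loop_E j e)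
  have e: "initials (sem e) \<noteq> {}" "j \<notin> initials (sem e)" "loop_tail_initial (sem e)"
    using valid_E_lang[of k e "Some j"] loop_E by auto
  let ?T = "conc (kstar {[j]}) (sem e)"
  have "sem e \<noteq> {}" using e(1) by auto
  then have "Deriv l ?T \<noteq> ?T" if "l \<noteq> j" for l
    using Deriv_conc_kstar_loop_tail_neq e(3) that by blast
  moreover have "Deriv j ?T = ?T"
    using e(2) by (simp add: Deriv_conc_kstar_singleton initials_def)
  ultimately have "loop_letters ?T = {j}" by (auto simp: loop_letters_def)
  moreover have "initials (sem e) \<subseteq> initials ?T"
    using subset_conc_kstar unfolding initials_def Deriv_def by blast
  ultimately show ?thesis
    using that(4)[OF loop_E(1-3)] loop_E e(1,2) by auto
qed

lemma P_arity_eq: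
  assumes "valid k (Node A ts)" "valid k (Node A ts')" "A = NP i \<or> A = NP' i"
    and "Deriv i (sem (Node A ts')) = Deriv i (sem (Node A ts))"
  shows "length ts' = length ts"
proof -
  \<comment> \<open>the four alternatives of P_i have 1, 2, 3 and 4 symbols\<close>
  define arity :: "lang \<Rightarrow> nat" where
    "arity X = (if initials X = {} then 1 else if loop_letters X = {} then 2
                else if initials X \<subseteq> loop_letters X then 3 else 4)" for X
  have "length us = arity (Deriv i (sem (Node A us)))" if "valid k (Node A us)" for us
    using that root.simps(2) assms(3) by (cases rule: P_tail_cases) (auto simp: arity_def)
  then show ?thesis using assms by metis
qed

definition sem_determined :: "nat \<Rightarrow> ptree \<Rightarrow> bool" where
  "sem_determined k t \<longleftrightarrow> (\<forall>t'. valid k t' \<longrightarrow> root t' = root t \<longrightarrow> sem t' = sem t \<longrightarrow> t' = t)"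

lemma sem_determinedD:
  "sem_determined k t \<Longrightarrow> valid k t' \<Longrightarrow> root t' = root t \<Longrightarrow> sem t' = sem t \<Longrightarrow> t' = t"
  unfolding sem_determined_def by blast

lemma sem_determined_P:
  assumes "valid k (Node A ts)" "A = NP i \<or> A = NP' i" "\<forall>x\<in>set ts. sem_determined k x"
  shows "sem_determined k (Node A ts)"
  unfolding sem_determined_def
proof (intro allI impI)
  fix t' assume t': "valid k t'" "root t' = root (Node A ts)" "sem t' = sem (Node A ts)"
  then obtain ts' where ts': "t' = Node A ts'" by (cases t') auto
  let ?T = "Deriv i (sem (Node A ts))"
  have T: "Deriv i (sem (Node A ts')) = ?T" using t'(3) ts' by simp
  have len: "length ts' = length ts" using P_arity_eq[OF assms(1) _ assms(2) T] t'(1) ts' by simp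
  from assms(1) root.simps(2) assms(2) show "t' = Node A ts"
  proof (cases rule: P_tail_cases)
    case letter
    from t'(1)[unfolded ts'] root.simps(2) assms(2) show ?thesis
      by (cases rule: P_tail_cases) (use letter len ts' in simp_all)
  next
    case (letter_E e)
    note t = this
    from t'(1)[unfolded ts'] root.simps(2) assms(2) show ?thesis
    proof (cases rule: P_tail_cases)
      case (letter_E e')
      have "sem e' = sem e" using letter_E(4) t(4) unfolding T by simp
      then have "e' = e" using sem_determinedD[of k e e'] assms(3) t(1-3) letter_E(2,3) by simp
      then show ?thesis using ts' t(1) letter_E(1) by simp
    qed (use t len in simp_all)
  next
    case (loop j)
    note t = this
    from t'(1)[unfolded ts'] root.simps(2) assms(2) show ?thesis
    proof (cases rule: P_tail_cases)
      case (loop j')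
      have "j' = j" using loop(3) t(3) unfolding T by simp
      then show ?thesis using ts' t(1) loop(1) by simp
    qed (use t len in simp_all)
  next
    case (loop_E j e)
    note t = this
    from t'(1)[unfolded ts'] root.simps(2) assms(2) show ?thesis
    proof (cases rule: P_tail_cases)
      case (loop_E j' e')
      have "j' = j" using loop_E(7) t(7) unfolding T by simp
      have "conc (kstar {[j]}) (sem e') = conc (kstar {[j]}) (sem e)"
        using loop_E(4) t(4) unfolding T \<open>j' = j\<close> by simp
      then have "sem e' = sem e"
        using conc_kstar_singleton_cancel loop_E(5) t(5) \<open>j' = j\<close> by blast
      then have "e' = e"
        using sem_determinedD[of k e e'] assms(3) t(1-3) loop_E(2,3) \<open>j' = j\<close> by simp
      then show ?thesis using ts' t(1) loop_E(1) \<open>j' = j\<close> by simp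
    qed (use t len in simp_all)
  qed
qed

lemma P_tree_eq_of_sem_eq:
  assumes "sem_determined k p" "valid k p" "valid k p'" "root p = N (F l)" "root p' = N (F l')"
    and "F = NP \<or> F = NP'" "sem p' = sem p"
  shows "p' = p"
proof -
  have "initials (sem p) = {l}" "initials (sem p') = {l'}"
    using valid_P_lang(2)[OF assms(2,4)] valid_P_lang(2)[OF assms(3,5)] assms(6) by auto
  then have "l' = l" using assms(7) by simp
  then show ?thesis using sem_determinedD[OF assms(1,3)] assms(4,5,7) by simp
qed

definition E_rhs :: "lang \<Rightarrow> ptree \<Rightarrow> ptree list" where
  "E_rhs L x = (if [] \<in> L then [Leaf LP, Leaf Eps, Leaf Plus, x, Leaf RP]
                else if \<exists>l. initials L = {l} then [x] else [Leaf LP, x, Leaf RP])"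

definition E_child :: "nat option \<Rightarrow> lang \<Rightarrow> nt" where
  "E_child c L = (if \<exists>l. initials L = {l} then if [] \<in> L then Y'_of c else Y_of c else Z_of c)"

lemma valid_E_decompose:
  assumes "valid k t" "root t = N (E_of c)"
  obtains x where "t = Node (E_of c) (E_rhs (sem t) x)" "valid k x" "root x = N (E_child c (sem t))"
    "sem x = sem t - {[]}"
  using assms
proof (cases rule: valid_E_cases)
  case (Y y)
  then have "[] \<notin> sem y" "\<exists>l. initials (sem y) = {l}" using valid_lang_inv[OF Y(2,3)] by auto
  with Y show ?thesis by (intro that[of y]) (simp_all add: E_rhs_def E_child_def)
next
  case (Z z)
  then have "[] \<notin> sem z" "\<nexists>l. initials (sem z) = {l}" using valid_lang_inv[OF Z(2,3)] by auto
  with Z show ?thesis by (intro that[of z]) (simp_all add: E_rhs_def E_child_def)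
next
  case (opt_Y' y)
  then have "[] \<notin> sem y" "\<exists>l. initials (sem y) = {l}" using valid_lang_inv[OF opt_Y'(2,3)] by auto
  with opt_Y' show ?thesis by (intro that[of y]) (simp_all add: E_rhs_def E_child_def)
next
  case (opt_Z z)
  then have "[] \<notin> sem z" "\<nexists>l. initials (sem z) = {l}" using valid_lang_inv[OF opt_Z(2,3)] by auto
  with opt_Z show ?thesis by (intro that[of z]) (simp_all add: E_rhs_def E_child_def)
qed

lemma sem_determined_E:
  assumes "valid k (Node (E_of c) ts)" "\<forall>x\<in>set ts. sem_determined k x"
  shows "sem_determined k (Node (E_of c) ts)" (is "sem_determined k ?t")
  unfolding sem_determined_def
proof (intro allI impI)
  fix t' assume t': "valid k t'" "root t' = root ?t" "sem t' = sem ?t"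
  have r: "root ?t = N (E_of c)" "root t' = N (E_of c)" using t'(2) by simp_all
  obtain x where x: "?t = Node (E_of c) (E_rhs (sem ?t) x)" "valid k x"
    "root x = N (E_child c (sem ?t))" "sem x = sem ?t - {[]}"
    by (rule valid_E_decompose[OF assms(1) r(1)])
  obtain x' where x': "t' = Node (E_of c) (E_rhs (sem ?t) x')" "valid k x'"
    "root x' = N (E_child c (sem ?t))" "sem x' = sem ?t - {[]}"
    using valid_E_decompose[OF t'(1) r(2)] unfolding t'(3) .
  have "x \<in> set ts" using x(1) by (simp add: E_rhs_def split: if_splits)
  then have "x' = x" using sem_determinedD[OF _ x'(2)] assms(2) x(3,4) x'(3,4) by simp
  then show "t' = ?t" using x(1) x'(1) by (simp only:)
qed

lemma valid_Z_components:
  assumes "valid k t" "root t = N (Z_of c)"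
  obtains qs ns where "t = Node (Z_of c) (plus_sep qs)" "length qs = length ns" "sorted_wrt (<) ns"
    "initials (sem t) = set ns" "\<forall>q\<in>set qs. valid k q"
    "\<forall>m<length qs. root (qs ! m) = N (NP' (ns ! m))"
    "\<forall>m<length qs. sem (qs ! m) = (#) (ns ! m) ` Deriv (ns ! m) (sem t)"
  using assms
proof (cases rule: valid_Z_cases)
  case (1 qs ns)
  note Z = sem_Z_node[OF 1(2,4,3)]
  have child: "[] \<notin> sem (qs ! m) \<and> initials (sem (qs ! m)) = {ns ! m}" if "m \<in> {..<length qs}" for m
    using valid_P_lang[of k "qs ! m" "NP' (ns ! m)" "ns ! m"] 1(5) Z(3) that by simp
  have sem_t: "sem t = (\<Union>m\<in>{..<length qs}. sem (qs ! m))" using Z(1) 1(1) by simp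
  note UN = UN_initial_components[of "{..<length qs}" "\<lambda>m. sem (qs ! m)", OF child Z(4)]
  show ?thesis
  proof (rule that[OF 1(1) Z(2)[symmetric] 1(3) _ 1(5) Z(3)])
    show "initials (sem t) = set ns" using UN(2) Z(5) sem_t by simp
    show "\<forall>m<length qs. sem (qs ! m) = (#) (ns ! m) ` Deriv (ns ! m) (sem t)"
      using UN(3) child image_Cons_Deriv sem_t by simp
  qed
qed

lemma sem_determined_Z:
  assumes "valid k (Node (Z_of c) ts)" "\<forall>x\<in>set ts. sem_determined k x"
  shows "sem_determined k (Node (Z_of c) ts)" (is "sem_determined k ?t")
  unfolding sem_determined_def
proof (intro allI impI)
  fix t' assume t': "valid k t'" "root t' = root ?t" "sem t' = sem ?t"
  have r: "root ?t = N (Z_of c)" "root t' = N (Z_of c)" using t'(2) by simp_all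
  obtain qs ns where Z: "?t = Node (Z_of c) (plus_sep qs)" "length qs = length ns" "sorted_wrt (<) ns"
    "initials (sem ?t) = set ns" "\<forall>q\<in>set qs. valid k q"
    "\<forall>m<length qs. root (qs ! m) = N (NP' (ns ! m))"
    "\<forall>m<length qs. sem (qs ! m) = (#) (ns ! m) ` Deriv (ns ! m) (sem ?t)"
    using valid_Z_components[OF assms(1) r(1)] .
  obtain qs' ns' where Z': "t' = Node (Z_of c) (plus_sep qs')" "length qs' = length ns'"
    "sorted_wrt (<) ns'" "initials (sem ?t) = set ns'" "\<forall>q\<in>set qs'. valid k q"
    "\<forall>m<length qs'. root (qs' ! m) = N (NP' (ns' ! m))"
    "\<forall>m<length qs'. sem (qs' ! m) = (#) (ns' ! m) ` Deriv (ns' ! m) (sem ?t)"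
    using valid_Z_components[OF t'(1) r(2)] unfolding t'(3) .
  have "ns' = ns"
    using Z(3,4) Z'(3,4) by (metis sorted_distinct_set_unique strict_sorted_iff)
  have "qs' ! m = qs ! m" if "m < length qs" for m
  proof (rule sem_determinedD)
    show "sem_determined k (qs ! m)"
      using assms(2) Z(1) set_plus_sep(1) nth_mem[OF that] by auto
  qed (use that Z Z' \<open>ns' = ns\<close> nth_mem in auto)
  then have "qs' = qs" using Z(2) Z'(2) \<open>ns' = ns\<close> by (simp add: nth_equalityI)
  then show "t' = ?t" using Z(1) Z'(1) by simp
qed

lemma sem_determined_Y:
  assumes "valid k (Node A ts)" "A = Y_of c \<or> A = Y'_of c" "\<forall>x\<in>set ts. sem_determined k x"
  shows "sem_determined k (Node A ts)"
  unfolding sem_determined_def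
proof (intro allI impI)
  fix t' assume t': "valid k t'" "root t' = root (Node A ts)" "sem t' = sem (Node A ts)"
  have r: "root (Node A ts) = N A" "root t' = N A" using t'(2) by simp_all
  obtain F p l p' l' where "ts = [p]" "t' = Node A [p']" "valid k p" "valid k p'"
    "root p = N (F l)" "root p' = N (F l')" "F = NP \<or> F = NP'"
    using assms(2)
  proof
    assume A: "A = Y_of c"
    from assms(1) r(1) obtain p l where "ts = [p]" "valid k p" "root p = N (NP l)"
      unfolding A by (cases rule: valid_Y_cases) auto
    moreover from t'(1) r(2) obtain p' l' where "t' = Node A [p']" "valid k p'" "root p' = N (NP l')"
      unfolding A by (cases rule: valid_Y_cases) auto
    ultimately show ?thesis using that by blast
  next
    assume A: "A = Y'_of c"
    from assms(1) r(1) obtain p l where "ts = [p]" "valid k p" "root p = N (NP' l)"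
      unfolding A by (cases rule: valid_Y'_cases) auto
    moreover from t'(1) r(2) obtain p' l' where "t' = Node A [p']" "valid k p'" "root p' = N (NP' l')"
      unfolding A by (cases rule: valid_Y'_cases) auto
    ultimately show ?thesis using that by blast
  qed
  moreover from this have "p' = p" using P_tree_eq_of_sem_eq assms(3) t'(3) by simp
  ultimately show "t' = Node A ts" by simp
qed

lemma valid_S_decompose:
  assumes "valid k t" "root t = N NS"
  obtains x where "t = Node NS [x]" "valid k x"
    "root x = N (if \<exists>l. initials (sem t) = {l} then NY else NZ)"
  using assms
proof (cases rule: valid_S_cases)
  case (Y y)
  then have "\<exists>l. initials (sem y) = {l}" using valid_lang_inv[OF Y(2,3)] by auto
  then show ?thesis using that[of y] Y by simp
next
  case (Z z)
  then have "\<nexists>l. initials (sem z) = {l}" using valid_lang_inv[OF Z(2,3)] by auto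
  then show ?thesis using that[of z] Z by simp
qed

lemma sem_determined_S:
  assumes "valid k (Node NS ts)" "\<forall>x\<in>set ts. sem_determined k x"
  shows "sem_determined k (Node NS ts)" (is "sem_determined k ?t")
  unfolding sem_determined_def
proof (intro allI impI)
  fix t' assume t': "valid k t'" "root t' = root ?t" "sem t' = sem ?t"
  have r: "root ?t = N NS" "root t' = N NS" using t'(2) by simp_all
  obtain x where x: "?t = Node NS [x]" "valid k x"
    "root x = N (if \<exists>l. initials (sem ?t) = {l} then NY else NZ)"
    by (rule valid_S_decompose[OF assms(1) r(1)])
  obtain x' where x': "t' = Node NS [x']" "valid k x'"
    "root x' = N (if \<exists>l. initials (sem ?t) = {l} then NY else NZ)"
    using valid_S_decompose[OF t'(1) r(2)] unfolding t'(3) .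
  have "x' = x" using sem_determinedD[OF _ x'(2)] assms(2) x x' t'(3) by simp
  then show "t' = ?t" using x(1) x'(1) by simp
qed

lemma valid_sem_determined: "valid k t \<Longrightarrow> sem_determined k t"
proof (induction t rule: ptree.induct)
  case (Leaf x)
  then show ?case by (simp add: sem_determined_def)
next
  case (Node A ts)
  then have children: "\<forall>x\<in>set ts. sem_determined k x" by (simp add: valid_Node_iff)
  show ?case
  proof (cases A rule: nt_family_cases)
    case S
    then show ?thesis using sem_determined_S Node.prems children by simp
  next
    case (E c)
    then show ?thesis using sem_determined_E Node.prems children by simp
  next
    case (Y c)
    then show ?thesis using sem_determined_Y Node.prems children by blast
  next
    case (Y' c)
    then show ?thesis using sem_determined_Y Node.prems children by blast
  next
    case (Z c)
    then show ?thesis using sem_determined_Z Node.prems children by simp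
  next
    case (P i)
    then show ?thesis using sem_determined_P Node.prems children by blast
  qed
qed

lemma valid_S_re_expr: "valid k t \<Longrightarrow> root t = N NS \<Longrightarrow> re_expr (yield t) (sem t)"
  using valid_re_nt by fastforce

lemma valid_S_sem_inj:
  "valid k t1 \<Longrightarrow> valid k t2 \<Longrightarrow> root t1 = N NS \<Longrightarrow> root t2 = N NS \<Longrightarrow> sem t1 = sem t2 \<Longrightarrow> t1 = t2"
  using valid_sem_determined sem_determinedD by metis

theorem mainTheorem3:
  fixes k :: nat
  assumes "k \<ge> 1"
  shows "unambiguous k
    \<and> (\<forall>w. generates k w \<longrightarrow> (\<exists>L. re_expr w L))
    \<and> (\<forall>w1 w2 L1 L2. generates k w1 \<and> generates k w2 \<and> w1 \<noteq> w2
          \<and> re_expr w1 L1 \<and> re_expr w2 L2 \<longrightarrow> L1 \<noteq> L2)"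
proof (intro conjI allI impI)
  show "unambiguous k"
    unfolding unambiguous_def
    using valid_S_re_expr re_expr_unique valid_S_sem_inj by metis
  show "\<exists>L. re_expr w L" if "generates k w" for w
    using that valid_S_re_expr unfolding generates_def by blast
  fix w1 w2 L1 L2
  assume "generates k w1 \<and> generates k w2 \<and> w1 \<noteq> w2 \<and> re_expr w1 L1 \<and> re_expr w2 L2"
  then obtain t1 t2 where t: "valid k t1" "root t1 = N NS" "yield t1 = w1"
    "valid k t2" "root t2 = N NS" "yield t2 = w2" "w1 \<noteq> w2" "re_expr w1 L1" "re_expr w2 L2"
    unfolding generates_def by blast
  then have "L1 = sem t1" "L2 = sem t2" using valid_S_re_expr re_expr_unique by blast+
  then show "L1 \<noteq> L2" using valid_S_sem_inj t by blast
qed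

end
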